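(* Let $H$ be a hypergraph with $R(H)=\{1,2\}$ such that the graph $H^2$ of its $2$-edges is bipartite, $H$ does not contain $K_2^{\{1,2\}}$ as a subgraph, and $H$ contains a closed path $\bar P_{2k}$ of length $2k$ for some $k\ge 1$. Then $\pi(H)=\frac98$.
   Context: A hypergraph $H=(V,E)$ has finite vertex set $V$ and edge set $E\subseteq 2^V$; $R(H)=\{|F|:F\in E\}$. $H_1\subseteq H_2$ (subgraph) means there is an injective $f\colon V(H_1)\to V(H_2)$ with $f(F)\in E(H_2)$ for all $F\in E(H_1)$. For $G$ on $n$ vertices, $h_n(G)=\sum_{F\in E(G)}1/\binom{n}{|F|}$; $\pi_n(H)=\max\{h_n(G): G\text{ on } n \text{ vertices}, R(G)\subseteq R(H), H\not\subseteq G\}$ and $\pi(H)=\lim_n\pi_n(H)$. $K_2^{\{1,2\}}$ has vertices $\{1,2\}$ and edges $\{1\},\{2\},\{1,2\}$. A closed path of length $m$, $\bar P_m$, is the hypergraph with vertices $x_1,\dots,x_m$, $1$-edges $\{x_1\},\{x_m\}$ and $2$-edges $\{x_i,x_{i+1}\}$ for $1\le i\le m-1$. *)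

theory Defs
  imports Complex_Main
begin

type_synonym 'a hgraph = "'a set \<times> 'a set set"

definition verts :: "'a hgraph \<Rightarrow> 'a set" where "verts H = fst H"
definition edges :: "'a hgraph \<Rightarrow> 'a set set" where "edges H = snd H"

definition is_hypergraph :: "'a hgraph \<Rightarrow> bool" where
  "is_hypergraph H \<longleftrightarrow> finite (verts H) \<and> edges H \<subseteq> Pow (verts H)"

definition R :: "'a hgraph \<Rightarrow> nat set" where
  "R H = card ` edges H"

definition subgraph :: "'a hgraph \<Rightarrow> 'b hgraph \<Rightarrow> bool" where
  "subgraph H1 H2 \<longleftrightarrow> (\<exists>f. inj_on f (verts H1) \<and> f ` verts H1 \<subseteq> verts H2 \<and>
      (\<forall>F\<in>edges H1. f ` F \<in> edges H2))"

definition h :: "nat \<Rightarrow> 'a hgraph \<Rightarrow> real" where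
  "h n G = (\<Sum>F\<in>edges G. 1 / real (n choose card F))"

text \<open>pi_n(H): hypergraphs on n vertices are taken, w.l.o.g., on vertex set {0..<n}.\<close>
definition pi_n :: "'a hgraph \<Rightarrow> nat \<Rightarrow> real" where
  "pi_n H n = Max {h n G | G :: nat hgraph. verts G = {0..<n} \<and> is_hypergraph G \<and>
                     R G \<subseteq> R H \<and> \<not> subgraph H G}"

definition K2_12 :: "nat hgraph" where
  "K2_12 = ({1, 2}, {{1}, {2}, {1, 2}})"

definition closed_path :: "nat \<Rightarrow> nat hgraph" where
  "closed_path m = ({1..m}, {{1}, {m}} \<union> {{i, i + 1} | i. 1 \<le> i \<and> i \<le> m - 1})"

definition two_graph_bipartite :: "'a hgraph \<Rightarrow> bool" where
  "two_graph_bipartite H \<longleftrightarrow> (\<exists>A B. A \<inter> B = {} \<and> A \<union> B = verts H \<and>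
      (\<forall>F\<in>edges H. card F = 2 \<longrightarrow> card (F \<inter> A) = 1 \<and> card (F \<inter> B) = 1))"

end

theory Submission
  imports Defs
begin

text \<open>Lower bound: split \<open>n\<close> vertices into a part of size \<open>3n/4\<close> carrying all 1-edges and the
  remaining \<open>n/4\<close> vertices, and add all 2-edges between the parts. Along a closed path the parts
  alternate while both ends lie in the first part, so no closed path of even length (hence not \<open>H\<close>)
  embeds, and the density tends to \<open>3/4 + 2 (3/4) (1/4) = 9/8\<close>.

  Upper bound: call a vertex marked if it carries a 1-edge and rich if it has at least \<open>d n\<close> marked
  neighbours. If at least \<open>d n\<^sup>2\<close> 2-edges join rich vertices, there are \<open>\<Omega>(n\<^sup>4)\<close> paths \<open>u z w v\<close>
  with marked ends, and Kovari-Sos-Turan counting yields a complete box of such paths with sides of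
  size \<open>|V(H)|\<close>. As \<open>H\<^sup>2\<close> is bipartite and no 2-edge of \<open>H\<close> joins two marked vertices, \<open>H\<close> embeds
  into this box. Otherwise almost every 2-edge has an end that is poor, i.e. has few marked
  neighbours, and counting these edges gives \<open>h\<^sub>n(G) \<le> 9/8 + O(d) + O(1/n)\<close>.\<close>

lemma subgraph_trans: "subgraph A B \<Longrightarrow> subgraph B C \<Longrightarrow> subgraph A C"
proof -
  assume "subgraph A B" "subgraph B C"
  then obtain f g where f: "inj_on f (verts A)" "f ` verts A \<subseteq> verts B" "\<forall>F\<in>edges A. f ` F \<in> edges B"
    and g: "inj_on g (verts B)" "g ` verts B \<subseteq> verts C" "\<forall>F\<in>edges B. g ` F \<in> edges C"
    by (auto simp: subgraph_def)
  have "inj_on (g \<circ> f) (verts A)" using f g by (auto intro: comp_inj_on inj_on_subset)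
  moreover have "(g \<circ> f) ` verts A \<subseteq> verts C" using f g by auto
  moreover have "\<forall>F\<in>edges A. g ` f ` F \<in> edges C" using f g by blast
  then have "\<forall>F\<in>edges A. (g \<circ> f) ` F \<in> edges C" by (simp add: image_comp)
  ultimately show ?thesis unfolding subgraph_def by blast
qed

lemma K2_12_subgraphI:
  assumes "is_hypergraph H" and "{x, y} \<in> edges H" "{x} \<in> edges H" "{y} \<in> edges H" and "x \<noteq> y"
  shows "subgraph K2_12 H"
  unfolding subgraph_def
proof (intro exI[of _ "\<lambda>i::nat. if i = 1 then x else y"] conjI)
  show "inj_on (\<lambda>i::nat. if i = 1 then x else y) (verts K2_12)"
    using assms(5) by (auto simp: inj_on_def K2_12_def verts_def)
  show "(\<lambda>i::nat. if i = 1 then x else y) ` verts K2_12 \<subseteq> verts H"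
    using assms(1,2) by (auto simp: K2_12_def verts_def is_hypergraph_def)
  show "\<forall>F\<in>edges K2_12. (\<lambda>i::nat. if i = 1 then x else y) ` F \<in> edges H"
    using assms(2-4) by (auto simp: K2_12_def edges_def insert_commute)
qed

lemma finite_edges: "is_hypergraph G \<Longrightarrow> finite (edges G)"
  by (auto simp: is_hypergraph_def intro: finite_subset[of _ "Pow (verts G)"])

lemma card_verts_ge_one:
  assumes "is_hypergraph H" "1 \<in> R H"
  shows "card (verts H) \<ge> 1"
proof -
  obtain F where "F \<in> edges H" "card F = 1" using assms(2) by (auto simp: R_def)
  then have "verts H \<noteq> {}" using assms(1) by (auto simp: is_hypergraph_def card_1_singleton_iff)
  then show ?thesis using assms(1) by (simp add: is_hypergraph_def Suc_le_eq card_gt_0_iff)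
qed

lemma of_nat_choose_two: "real (m choose 2) = real m * (real m - 1) / 2"
proof (induction m)
  case (Suc m)
  have "Suc m choose 2 = m + (m choose 2)"
    by (metis Suc_1 binomial_Suc_Suc choose_one)
  then show ?case using Suc by (simp add: algebra_simps)
qed simp

lemma h_eq_card_one_two_edges:
  assumes "finite (edges G)" and "R G \<subseteq> {1, 2}"
  shows "h n G = real (card {F \<in> edges G. card F = 1}) / real n
               + real (card {F \<in> edges G. card F = 2}) / real (n choose 2)"
proof -
  have split: "edges G = {F \<in> edges G. card F = 1} \<union> {F \<in> edges G. card F = 2}"
    using assms(2) by (auto simp: R_def)
  have "h n G = (\<Sum>F\<in>{F \<in> edges G. card F = 1}. 1 / real (n choose card F))
              + (\<Sum>F\<in>{F \<in> edges G. card F = 2}. 1 / real (n choose card F))"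
    unfolding h_def using assms(1) by (subst split) (rule sum.union_disjoint; auto)
  also have "\<dots> = (\<Sum>F\<in>{F \<in> edges G. card F = 1}. 1 / real n)
                 + (\<Sum>F\<in>{F \<in> edges G. card F = 2}. 1 / real (n choose 2))"
    by (intro arg_cong2[where f = "(+)"] sum.cong) auto
  finally show ?thesis by simp
qed

section \<open>The extremal construction\<close>

definition marked_bipartite :: "nat \<Rightarrow> nat \<Rightarrow> nat hgraph" where
  "marked_bipartite n m = ({0..<n}, (\<lambda>x. {x}) ` {0..<m} \<union> (\<lambda>(x, y). {x, y}) ` ({0..<m} \<times> {m..<n}))"

lemma verts_marked_bipartite: "verts (marked_bipartite n m) = {0..<n}"
  by (simp add: marked_bipartite_def verts_def)

lemma edges_marked_bipartite:
  "F \<in> edges (marked_bipartite n m) \<longleftrightarrow>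
     (\<exists>x<m. F = {x}) \<or> (\<exists>x y. x < m \<and> m \<le> y \<and> y < n \<and> F = {x, y})"
proof -
  have "F \<in> (\<lambda>(x, y). {x, y}) ` ({0..<m} \<times> {m..<n}) \<longleftrightarrow>
          (\<exists>x y. x < m \<and> m \<le> y \<and> y < n \<and> F = {x, y})"
    by force
  then show ?thesis by (auto simp: marked_bipartite_def edges_def)
qed

lemma is_hypergraph_marked_bipartite: "m \<le> n \<Longrightarrow> is_hypergraph (marked_bipartite n m)"
  by (auto simp: is_hypergraph_def verts_marked_bipartite edges_marked_bipartite)

lemma R_marked_bipartite: "R (marked_bipartite n m) \<subseteq> {1, 2}"
  by (auto simp: R_def edges_marked_bipartite)

lemma closed_path_not_subgraph_marked_bipartite:
  assumes "k \<ge> 1"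
  shows "\<not> subgraph (closed_path (2 * k)) (marked_bipartite n m)"
proof
  assume "subgraph (closed_path (2 * k)) (marked_bipartite n m)"
  then obtain f where inj: "inj_on f {1..2 * k}"
    and edge: "\<And>F. F \<in> edges (closed_path (2 * k)) \<Longrightarrow> f ` F \<in> edges (marked_bipartite n m)"
    by (auto simp: subgraph_def closed_path_def verts_def)
  have path_edges: "{1} \<in> edges (closed_path (2 * k))" "{2 * k} \<in> edges (closed_path (2 * k))"
    "\<And>i. 1 \<le> i \<Longrightarrow> i + 1 \<le> 2 * k \<Longrightarrow> {i, i + 1} \<in> edges (closed_path (2 * k))"
    by (auto simp: closed_path_def edges_def)
  have ends: "f 1 < m" "f (2 * k) < m"
    using edge[OF path_edges(1)] edge[OF path_edges(2)] by (auto simp: edges_marked_bipartite)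
  have step: "f i < m \<longleftrightarrow> \<not> f (i + 1) < m" if "1 \<le> i" "i + 1 \<le> 2 * k" for i
  proof -
    have "{f i, f (i + 1)} \<in> edges (marked_bipartite n m)"
      using edge[OF path_edges(3)] that by simp
    moreover have "f i \<noteq> f (i + 1)"
      using inj_onD[OF inj, of i "i + 1"] that by auto
    ultimately show ?thesis
      by (auto simp: edges_marked_bipartite doubleton_eq_iff)
  qed
  have "f i < m \<longleftrightarrow> odd i" if "1 \<le> i" "i \<le> 2 * k" for i
    using that
  proof (induction i rule: nat_induct_at_least)
    case (Suc i)
    then show ?case using step[of i] by simp
  qed (use ends in simp)
  then show False using ends assms by simp
qed

lemma h_marked_bipartite:
  assumes "m \<le> n"
  shows "h n (marked_bipartite n m) = real m / real n + real (m * (n - m)) / real (n choose 2)"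
proof -
  have ones: "{F \<in> edges (marked_bipartite n m). card F = 1} = (\<lambda>x. {x}) ` {0..<m}"
    using assms by (force simp: edges_marked_bipartite)
  have twos: "{F \<in> edges (marked_bipartite n m). card F = 2} = (\<lambda>(x, y). {x, y}) ` ({0..<m} \<times> {m..<n})"
    by (force simp: edges_marked_bipartite)
  have "inj_on (\<lambda>(x, y). {x, y}) ({0..<m} \<times> {m..<n})"
    by (auto simp: inj_on_def doubleton_eq_iff)
  then have "card {F \<in> edges (marked_bipartite n m). card F = 2} = m * (n - m)"
    unfolding twos by (simp add: card_image card_cartesian_product)
  moreover have "card {F \<in> edges (marked_bipartite n m). card F = 1} = m"
    unfolding ones by (simp add: card_image)
  moreover have "finite (edges (marked_bipartite n m))"
    by (simp add: marked_bipartite_def edges_def)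
  ultimately show ?thesis
    using h_eq_card_one_two_edges[OF _ R_marked_bipartite] by simp
qed

text \<open>With a marked side of size \<open>r n\<close> the density is \<open>r + 2 r (1 - r) + o(1)\<close>, maximal at \<open>r = 3/4\<close>.\<close>
lemma h_marked_bipartite_three_quarters:
  assumes "n \<ge> 2"
  shows "9/8 - 2 / real n ^ 2 \<le> h n (marked_bipartite n (3 * n div 4))"
proof -
  define m where "m = 3 * n div 4"
  define r where "r = real m / real n"
  have n: "real n \<ge> 2" using assms by simp
  have "4 * m \<le> 3 * n" "3 * n < 4 * m + 4" by (simp_all add: m_def)
  then have "4 * real m \<le> 3 * real n" "3 * real n \<le> 4 * real m + 4" by linarith+
  then have r_bounds: "r \<le> 3/4" "3/4 - 1 / real n \<le> r"
    using n by (simp_all add: r_def divide_simps)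
  have "(r - 3/4)^2 \<le> (1 / real n)^2"
    using r_bounds by (simp add: power2_commute[of r] power_mono)
  then have close: "r + 2 * r * (1 - r) \<ge> 9/8 - 2 / real n ^ 2"
    by (simp add: power_divide algebra_simps power2_eq_square)
  have "m \<le> n" by (simp add: m_def)
  have "2 * r * (1 - r) = real (m * (n - m)) / (real n ^ 2 / 2)"
    using n \<open>m \<le> n\<close> by (simp add: r_def of_nat_diff field_simps power2_eq_square)
  also have "\<dots> \<le> real (m * (n - m)) / real (n choose 2)"
    using n by (intro divide_left_mono) (simp_all add: of_nat_choose_two power2_eq_square)
  finally have "2 * r * (1 - r) \<le> real (m * (n - m)) / real (n choose 2)" .
  then show ?thesis
    using close h_marked_bipartite[of m n] by (simp add: m_def r_def)
qed

section \<open>Kovari-Sos-Turan counting\<close>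

lemma eventually_le_mult_real_sequentially:
  fixes a e :: real
  assumes "e > 0"
  shows "eventually (\<lambda>n. a \<le> e * real n) sequentially"
proof -
  obtain N :: nat where "a / e \<le> real N" using real_arch_simple by blast
  then have "a \<le> e * real N" using assms by (simp add: divide_le_eq mult.commute)
  moreover have "e * real N \<le> e * real n" if "N \<le> n" for n using assms that by simp
  ultimately show ?thesis by (intro eventually_sequentiallyI) (rule order_trans)
qed

lemma card_rich_fibres_ge:
  fixes S :: "('a \<times> 'b) set"
  assumes "finite X" "X \<noteq> {}" "finite P" "S \<subseteq> X \<times> P" "e \<ge> 0"
    and "e * real (card X) * real (card P) \<le> real (card S)"
  shows "e / 2 * real (card P) \<le> real (card {p \<in> P. e * real (card X) / 2 \<le> real (card {x. (x, p) \<in> S})})"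
proof -
  define F where "F p = {x. (x, p) \<in> S}" for p
  define P' where "P' = {p \<in> P. e * real (card X) / 2 \<le> real (card (F p))}"
  have F_sub: "F p \<subseteq> X" for p using assms(4) by (auto simp: F_def)
  have "S = (\<lambda>(p, x). (x, p)) ` Sigma P F" using assms(4) by (auto simp: F_def image_iff)
  then have "card S = card (Sigma P F)" by (simp add: card_image inj_on_def)
  also have "\<dots> = (\<Sum>p\<in>P. card (F p))"
    using assms(1,3) F_sub by (intro card_SigmaI) (auto intro: finite_subset)
  finally have "real (card S) = (\<Sum>p\<in>P'. real (card (F p))) + (\<Sum>p\<in>P - P'. real (card (F p)))"
    using assms(3) by (simp add: P'_def sum.subset_diff[of P' P])
  also have "\<dots> \<le> (\<Sum>p\<in>P'. real (card X)) + (\<Sum>p\<in>P - P'. e * real (card X) / 2)"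
    using assms(1) F_sub by (intro add_mono sum_mono) (auto simp: P'_def card_mono)
  also have "\<dots> \<le> real (card P') * real (card X) + real (card P) * (e * real (card X) / 2)"
    using assms(3,5) by (auto intro!: mult_right_mono card_mono)
  finally have "e / 2 * real (card P) * real (card X) \<le> real (card P') * real (card X)"
    using assms(6) by (simp add: algebra_simps)
  moreover have "card X > 0" using assms(1,2) by (simp add: card_gt_0_iff)
  ultimately show ?thesis by (simp add: P'_def F_def)
qed

lemma sum_choose_card_eq_sum_card_supersets:
  assumes "finite P" "finite X" "\<And>p. p \<in> P \<Longrightarrow> F p \<subseteq> X"
  shows "(\<Sum>p\<in>P. card (F p) choose t) = (\<Sum>T\<in>{T. T \<subseteq> X \<and> card T = t}. card {p \<in> P. T \<subseteq> F p})"
proof -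
  let ?Ts = "{T. T \<subseteq> X \<and> card T = t}"
  have fin_Ts: "finite ?Ts" using assms(2) by (simp add: finite_subset)
  have "card (F p) choose t = (\<Sum>T\<in>?Ts. if T \<subseteq> F p then 1 else 0)" if "p \<in> P" for p
  proof -
    have "{T \<in> ?Ts. T \<subseteq> F p} = {T. T \<subseteq> F p \<and> card T = t}" using assms(3)[OF that] by auto
    then show ?thesis
      using n_subsets[of "F p" t] finite_subset[OF assms(3)[OF that] assms(2)] fin_Ts
      by (simp add: sum.inter_filter[symmetric])
  qed
  then have "(\<Sum>p\<in>P. card (F p) choose t) = (\<Sum>p\<in>P. \<Sum>T\<in>?Ts. if T \<subseteq> F p then 1 else 0)"
    by (rule sum.cong[OF refl])
  also have "\<dots> = (\<Sum>T\<in>?Ts. \<Sum>p\<in>P. if T \<subseteq> F p then 1 else 0)" by (rule sum.swap)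
  also have "\<dots> = (\<Sum>T\<in>?Ts. card {p \<in> P. T \<subseteq> F p})"
    using assms(1) by (simp add: sum.inter_filter[symmetric])
  finally show ?thesis .
qed

lemma exists_ge_of_sum_ge:
  fixes f :: "'a \<Rightarrow> real"
  assumes "finite A" "A \<noteq> {}" "real (card A) * c \<le> (\<Sum>x\<in>A. f x)"
  shows "\<exists>x\<in>A. c \<le> f x"
proof (rule ccontr)
  assume "\<not> ?thesis"
  then have "(\<Sum>x\<in>A. f x) < (\<Sum>x\<in>A. c)" using assms(1,2) by (intro sum_strict_mono) (auto simp: not_le)
  then show False using assms(3) by simp
qed

definition box_density :: "nat \<Rightarrow> real \<Rightarrow> real" where
  "box_density t e = e / 2 * (e / real (2 * t)) ^ t"

lemma box_density_pos: "e > 0 \<Longrightarrow> t \<ge> 1 \<Longrightarrow> box_density t e > 0"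
  by (simp add: box_density_def)

lemma box_density_le_one: "e > 0 \<Longrightarrow> e \<le> 1 \<Longrightarrow> t \<ge> 1 \<Longrightarrow> box_density t e \<le> 1"
proof -
  assume e: "e > 0" "e \<le> 1" and "t \<ge> 1"
  then have "(e / real (2 * t)) ^ t \<le> 1" by (simp add: power_le_one)
  then have "e * (e / real (2 * t)) ^ t \<le> 1 * 1" using e by (intro mult_mono) auto
  then show ?thesis by (simp add: box_density_def)
qed

text \<open>Kovari-Sos-Turan: double count the pairs of a rich fibre and a \<open>t\<close>-subset of it, and average
  over the \<open>t\<close>-subsets \<open>T\<close> of \<open>X\<close>.\<close>
lemma dense_relation_contains_product:
  fixes S :: "('a \<times> 'b) set"
  assumes "finite X" "finite P" "S \<subseteq> X \<times> P" "0 < e" "e \<le> 1" "t \<ge> 1"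
    and dense: "e * real (card X) * real (card P) \<le> real (card S)"
    and large: "2 * real t \<le> e * real (card X)"
  shows "\<exists>T Q. card T = t \<and> Q \<subseteq> P \<and> T \<times> Q \<subseteq> S \<and> box_density t e * real (card P) \<le> real (card Q)"
proof -
  define F where "F p = {x. (x, p) \<in> S}" for p
  define P' where "P' = {p \<in> P. e * real (card X) / 2 \<le> real (card (F p))}"
  define Ts where "Ts = {T. T \<subseteq> X \<and> card T = t}"
  define Q where "Q T = {p \<in> P'. T \<subseteq> F p}" for T
  have F_sub: "F p \<subseteq> X" for p using assms(3) by (auto simp: F_def)
  have "e * real (card X) \<le> real (card X)" using assms(4,5) by (simp add: mult_left_le_one_le)
  then have "real t \<le> real (card X)" using large assms(4) by linarith
  then have X: "X \<noteq> {}" "t \<le> card X" using assms(6) by auto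
  have P': "e / 2 * real (card P) \<le> real (card P')"
    unfolding P'_def F_def using card_rich_fibres_ge[OF assms(1) X(1) assms(2,3)] assms(4) dense by simp
  have card_Ts: "real (card Ts) \<le> real (card X) ^ t"
    unfolding Ts_def using n_subsets[OF assms(1), of t] binomial_le_pow[OF X(2)]
    by (metis of_nat_le_iff of_nat_power)
  have "(e * real (card X) / real (2 * t)) ^ t \<le> real (card (F p) choose t)" if "p \<in> P'" for p
  proof -
    have "e * real (card X) / 2 \<le> real (card (F p))" using that by (simp add: P'_def)
    then have "(e * real (card X) / real (2 * t)) ^ t \<le> (real (card (F p)) / real t) ^ t"
      using assms(4,6) by (intro power_mono) (auto simp: field_simps)
    also have "\<dots> \<le> real (card (F p) choose t)"
      using \<open>e * real (card X) / 2 \<le> _\<close> large by (intro binomial_ge_n_over_k_pow_k) linarith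
    finally show ?thesis .
  qed
  then have choose_ge: "real (card P') * (e * real (card X) / real (2 * t)) ^ t \<le> (\<Sum>p\<in>P'. real (card (F p) choose t))"
    using sum_mono[of P' "\<lambda>_. (e * real (card X) / real (2 * t)) ^ t"] by simp
  have "box_density t e * real (card P) * real (card X) ^ t
          = (e / 2 * real (card P)) * (e * real (card X) / real (2 * t)) ^ t"
    by (simp add: box_density_def power_mult_distrib power_divide field_simps)
  also have "\<dots> \<le> real (card P') * (e * real (card X) / real (2 * t)) ^ t"
    using P' assms(4) by (intro mult_right_mono) auto
  also have "\<dots> \<le> (\<Sum>p\<in>P'. real (card (F p) choose t))" by (fact choose_ge)
  also have "\<dots> = (\<Sum>T\<in>Ts. real (card (Q T)))"
    using sum_choose_card_eq_sum_card_supersets[of P' X F t] assms(1,2) F_sub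
    by (simp add: P'_def Ts_def Q_def flip: of_nat_sum)
  finally have sum_Q: "box_density t e * real (card P) * real (card X) ^ t \<le> (\<Sum>T\<in>Ts. real (card (Q T)))" .
  have "real (card Ts) * (box_density t e * real (card P)) \<le> real (card X) ^ t * (box_density t e * real (card P))"
    using card_Ts assms(4,6) by (intro mult_right_mono) (auto simp: box_density_def)
  also have "\<dots> \<le> (\<Sum>T\<in>Ts. real (card (Q T)))" using sum_Q by (simp add: algebra_simps)
  finally have "\<exists>T\<in>Ts. box_density t e * real (card P) \<le> real (card (Q T))"
    using obtain_subset_with_card_n[OF X(2)] assms(1)
    by (intro exists_ge_of_sum_ge) (auto simp: Ts_def)
  then obtain T where "T \<in> Ts" "box_density t e * real (card P) \<le> real (card (Q T))" by blast
  moreover have "Q T \<subseteq> P" "T \<times> Q T \<subseteq> S" by (auto simp: Q_def P'_def F_def)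
  ultimately show ?thesis by (auto simp: Ts_def)
qed

lemma dense_4tuples_contain_box:
  fixes c :: real
  assumes "0 < c" "c \<le> 1" "t \<ge> 1"
  shows "eventually (\<lambda>n. \<forall>S. S \<subseteq> {0..<n} \<times> {0..<n} \<times> {0..<n} \<times> {0..<n} \<longrightarrow>
           c * real n ^ 4 \<le> real (card S) \<longrightarrow>
           (\<exists>U Z W V. card U = t \<and> card Z = t \<and> card W = t \<and> card V = t \<and> U \<times> Z \<times> W \<times> V \<subseteq> S))
           sequentially"
proof -
  define c1 where "c1 = box_density t c"
  define c2 where "c2 = box_density t c1"
  define c3 where "c3 = box_density t c2"
  have c1: "0 < c1" "c1 \<le> 1" using assms by (simp_all add: c1_def box_density_pos box_density_le_one)
  have c2: "0 < c2" "c2 \<le> 1" using c1 assms(3) by (simp_all add: c2_def box_density_pos box_density_le_one)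
  have c3: "0 < c3" "c3 \<le> 1" using c2 assms(3) by (simp_all add: c3_def box_density_pos box_density_le_one)
  have "eventually (\<lambda>n. 2 * real t \<le> c * real n \<and> 2 * real t \<le> c1 * real n \<and>
          2 * real t \<le> c2 * real n \<and> 2 * real t \<le> c3 * real n) sequentially"
    using assms(1) c1(1) c2(1) c3(1) by (intro eventually_conj eventually_le_mult_real_sequentially)
  then show ?thesis
  proof (rule eventually_mono, intro allI impI)
    fix n :: nat and S :: "(nat \<times> nat \<times> nat \<times> nat) set"
    assume large: "2 * real t \<le> c * real n \<and> 2 * real t \<le> c1 * real n \<and>
          2 * real t \<le> c2 * real n \<and> 2 * real t \<le> c3 * real n"
      and S: "S \<subseteq> {0..<n} \<times> {0..<n} \<times> {0..<n} \<times> {0..<n}" "c * real n ^ 4 \<le> real (card S)"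
    let ?X = "{0..<n}"
    have "c * real (card ?X) * real (card (?X \<times> ?X \<times> ?X)) \<le> real (card S)"
      using S(2) by (simp add: card_cartesian_product power_def algebra_simps)
    then obtain T1 Q1 where T1: "card T1 = t" "Q1 \<subseteq> ?X \<times> ?X \<times> ?X" "T1 \<times> Q1 \<subseteq> S"
        and Q1: "c1 * real n ^ 3 \<le> real (card Q1)"
      using dense_relation_contains_product[OF _ _ S(1) assms] large
      by (fastforce simp: c1_def card_cartesian_product power3_eq_cube)
    have "c1 * real (card ?X) * real (card (?X \<times> ?X)) \<le> real (card Q1)"
      using Q1 by (simp add: card_cartesian_product power_def algebra_simps)
    then obtain T2 Q2 where T2: "card T2 = t" "Q2 \<subseteq> ?X \<times> ?X" "T2 \<times> Q2 \<subseteq> Q1"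
        and Q2: "c2 * real n ^ 2 \<le> real (card Q2)"
      using dense_relation_contains_product[OF _ _ T1(2) c1 assms(3)] large
      by (fastforce simp: c2_def card_cartesian_product power2_eq_square)
    have "c2 * real (card ?X) * real (card ?X) \<le> real (card Q2)"
      using Q2 by (simp add: power2_eq_square)
    then obtain T3 Q3 where T3: "card T3 = t" "Q3 \<subseteq> ?X" "T3 \<times> Q3 \<subseteq> Q2"
        and Q3: "c3 * real n \<le> real (card Q3)"
      using dense_relation_contains_product[OF _ _ T2(2) c2 assms(3)] large by (fastforce simp: c3_def)
    have "t \<le> card Q3" using Q3 large by linarith
    then obtain T4 where T4: "T4 \<subseteq> Q3" "card T4 = t" by (meson obtain_subset_with_card_n)
    have "T1 \<times> T2 \<times> T3 \<times> T4 \<subseteq> S" using T1(3) T2(3) T3(3) T4(1) by blast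
    then show "\<exists>U Z W V. card U = t \<and> card Z = t \<and> card W = t \<and> card V = t \<and> U \<times> Z \<times> W \<times> V \<subseteq> S"
      using T1(1) T2(1) T3(1) T4(2) by blast
  qed
qed

section \<open>Embedding into a blown-up marked path\<close>

lemma inj_on_into_blocks:
  assumes "finite A" "\<And>x. x \<in> A \<Longrightarrow> finite (c x)"
    and "\<And>x. x \<in> A \<Longrightarrow> card {y \<in> A. c y = c x} \<le> card (c x)"
    and "\<And>x y. x \<in> A \<Longrightarrow> y \<in> A \<Longrightarrow> c x \<noteq> c y \<Longrightarrow> c x \<inter> c y = {}"
  shows "\<exists>f. inj_on f A \<and> (\<forall>x\<in>A. f x \<in> c x)"
proof -
  have "\<forall>D\<in>c ` A. \<exists>g. inj_on g {y \<in> A. c y = D} \<and> g ` {y \<in> A. c y = D} \<subseteq> D"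
  proof
    fix D assume "D \<in> c ` A"
    then obtain x where "x \<in> A" "D = c x" by blast
    then show "\<exists>g. inj_on g {y \<in> A. c y = D} \<and> g ` {y \<in> A. c y = D} \<subseteq> D"
      using card_le_inj[of "{y \<in> A. c y = D}" D] assms(1-3) by auto
  qed
  then have "\<exists>g. \<forall>D\<in>c ` A. inj_on (g D) {y \<in> A. c y = D} \<and> g D ` {y \<in> A. c y = D} \<subseteq> D"
    by (rule bchoice)
  then obtain g where g: "\<forall>D\<in>c ` A. inj_on (g D) {y \<in> A. c y = D} \<and> g D ` {y \<in> A. c y = D} \<subseteq> D"
    by blast
  have g_block: "inj_on (g (c x)) {y \<in> A. c y = c x}" "g (c x) x \<in> c x" if "x \<in> A" for x
    using g that by auto
  have "inj_on (\<lambda>x. g (c x) x) A"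
  proof (rule inj_onI)
    fix x y assume xy: "x \<in> A" "y \<in> A" "g (c x) x = g (c y) y"
    have "c x = c y"
    proof (rule ccontr)
      assume "c x \<noteq> c y"
      then have "c x \<inter> c y = {}" using assms(4) xy(1,2) by blast
      then show False using g_block(2)[OF xy(1)] g_block(2)[OF xy(2)] xy(3) by auto
    qed
    then show "x = y" using g_block(1)[OF xy(1)] xy by (auto simp: inj_on_def)
  qed
  then show ?thesis using g_block(2) by blast
qed

definition marked_verts :: "'a hgraph \<Rightarrow> 'a set" where
  "marked_verts G = {x \<in> verts G. {x} \<in> edges G}"

definition marked_paths :: "'a hgraph \<Rightarrow> ('a \<times> 'a \<times> 'a \<times> 'a) set" where
  "marked_paths G = {(u, z, w, v). distinct [u, z, w, v] \<and> u \<in> marked_verts G \<and> v \<in> marked_verts G \<and>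
     {u, z} \<in> edges G \<and> {z, w} \<in> edges G \<and> {w, v} \<in> edges G}"

lemma marked_path_boxD:
  assumes box: "U \<times> Z \<times> W \<times> V \<subseteq> marked_paths G" and ne: "U \<noteq> {}" "Z \<noteq> {}" "W \<noteq> {}" "V \<noteq> {}"
  shows "U \<inter> Z = {}" "U \<inter> W = {}" "U \<inter> V = {}" "Z \<inter> W = {}" "Z \<inter> V = {}" "W \<inter> V = {}"
    and "\<And>x. x \<in> U \<union> V \<Longrightarrow> {x} \<in> edges G"
    and "\<And>u z. u \<in> U \<Longrightarrow> z \<in> Z \<Longrightarrow> {u, z} \<in> edges G"
    and "\<And>z w. z \<in> Z \<Longrightarrow> w \<in> W \<Longrightarrow> {z, w} \<in> edges G"
    and "\<And>w v. w \<in> W \<Longrightarrow> v \<in> V \<Longrightarrow> {w, v} \<in> edges G"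
proof -
  have path: "distinct [u, z, w, v] \<and> u \<in> marked_verts G \<and> v \<in> marked_verts G \<and>
      {u, z} \<in> edges G \<and> {z, w} \<in> edges G \<and> {w, v} \<in> edges G"
    if "u \<in> U" "z \<in> Z" "w \<in> W" "v \<in> V" for u z w v
    using box that by (auto simp: marked_paths_def)
  obtain u0 z0 w0 v0 where p0: "u0 \<in> U" "z0 \<in> Z" "w0 \<in> W" "v0 \<in> V" using ne by blast
  have neq: "u \<noteq> z" "u \<noteq> w" "u \<noteq> v" "z \<noteq> w" "z \<noteq> v" "w \<noteq> v"
    if "u \<in> U" "z \<in> Z" "w \<in> W" "v \<in> V" for u z w v
    using path[OF that] by auto
  show "U \<inter> Z = {}" "U \<inter> W = {}" "U \<inter> V = {}" "Z \<inter> W = {}" "Z \<inter> V = {}" "W \<inter> V = {}"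
    using neq(1)[OF _ _ p0(3,4)] neq(2)[OF _ p0(2) _ p0(4)] neq(3)[OF _ p0(2,3)]
      neq(4)[OF p0(1) _ _ p0(4)] neq(5)[OF p0(1) _ p0(3)] neq(6)[OF p0(1,2)] by blast+
  show "{x} \<in> edges G" if "x \<in> U \<union> V" for x
    using that path[of x z0 w0 v0] path[of u0 z0 w0 x] p0 by (auto simp: marked_verts_def)
  show "{u, z} \<in> edges G" if "u \<in> U" "z \<in> Z" for u z using path[of u z w0 v0] that p0 by simp
  show "{z, w} \<in> edges G" if "z \<in> Z" "w \<in> W" for z w using path[of u0 z w v0] that p0 by simp
  show "{w, v} \<in> edges G" if "w \<in> W" "v \<in> V" for w v using path[of u0 z0 w v] that p0 by simp
qed

text \<open>The two sides of the bipartition of \<open>H\<^sup>2\<close> go to the blocks \<open>U, W\<close> and \<open>Z, V\<close>, marked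
  vertices to the end blocks \<open>U, V\<close>. Since \<open>K2_12\<close> is not a subgraph of \<open>H\<close>, no 2-edge of \<open>H\<close> joins
  two marked vertices, so every edge lands on an edge of \<open>G\<close>.\<close>
lemma subgraph_of_path_blowup:
  fixes H :: "'a hgraph" and G :: "'b hgraph"
  assumes H: "is_hypergraph H" "R H = {1, 2}" "two_graph_bipartite H" "\<not> subgraph K2_12 H"
    and fin: "finite U" "finite Z" "finite W" "finite V"
    and big: "card (verts H) \<le> card U" "card (verts H) \<le> card Z" "card (verts H) \<le> card W"
      "card (verts H) \<le> card V"
    and disj: "U \<inter> Z = {}" "U \<inter> W = {}" "U \<inter> V = {}" "Z \<inter> W = {}" "Z \<inter> V = {}" "W \<inter> V = {}"
    and marked: "\<And>x. x \<in> U \<union> V \<Longrightarrow> {x} \<in> edges G"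
    and UZ: "\<And>u z. u \<in> U \<Longrightarrow> z \<in> Z \<Longrightarrow> {u, z} \<in> edges G"
    and ZW: "\<And>z w. z \<in> Z \<Longrightarrow> w \<in> W \<Longrightarrow> {z, w} \<in> edges G"
    and WV: "\<And>w v. w \<in> W \<Longrightarrow> v \<in> V \<Longrightarrow> {w, v} \<in> edges G"
    and blocks_verts: "U \<union> Z \<union> W \<union> V \<subseteq> verts G"
  shows "subgraph H G"
proof -
  obtain X Y where XY: "X \<inter> Y = {}" "X \<union> Y = verts H"
    and bip: "\<And>F. F \<in> edges H \<Longrightarrow> card F = 2 \<Longrightarrow> card (F \<inter> X) = 1 \<and> card (F \<inter> Y) = 1"
    using H(3) by (auto simp: two_graph_bipartite_def)
  have fin_H: "finite (verts H)" using H(1) by (simp add: is_hypergraph_def)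
  define T where "T = {x \<in> verts H. {x} \<in> edges H}"
  define block where "block x = (if x \<in> X then if x \<in> T then U else W else if x \<in> T then V else Z)" for x
  have disjoint: "block x \<inter> block y = {}" if "block x \<noteq> block y" for x y
    using that disj by (auto simp: block_def Int_commute)
  obtain f where f: "inj_on f (verts H)" "\<And>x. x \<in> verts H \<Longrightarrow> f x \<in> block x"
  proof -
    have fin_block: "finite (block x)" for x using fin by (simp add: block_def)
    have card_block: "card {y \<in> verts H. block y = block x} \<le> card (block x)" for x
    proof -
      have "card (verts H) \<le> card (block x)" using big by (simp add: block_def)
      then show ?thesis using card_mono[OF fin_H, of "{y \<in> verts H. block y = block x}"] by simp
    qed
    show ?thesis
      using inj_on_into_blocks[OF fin_H fin_block card_block disjoint] that by blast
  qed
  have "block x \<subseteq> U \<union> Z \<union> W \<union> V" for x by (auto simp: block_def)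
  then have f_verts: "f ` verts H \<subseteq> verts G" using f(2) blocks_verts by blast
  have f_edge: "f ` F \<in> edges G" if F: "F \<in> edges H" for F
  proof -
    have F_verts: "F \<subseteq> verts H" using F H(1) by (auto simp: is_hypergraph_def)
    from F H(2) have "card F = 1 \<or> card F = 2" by (auto simp: R_def)
    then show ?thesis
    proof
      assume "card F = 1"
      then obtain x where x: "F = {x}" by (auto simp: card_1_singleton_iff)
      then have "x \<in> T" using F F_verts by (simp add: T_def)
      then have "f x \<in> U \<union> V" using f(2)[of x] F_verts x by (auto simp: block_def split: if_splits)
      then show ?thesis using marked x by simp
    next
      assume "card F = 2"
      then obtain a b where "F \<inter> X = {a}" "F \<inter> Y = {b}" using bip[OF F] by (auto simp: card_1_singleton_iff)
      then have ab: "F = {a, b}" "a \<in> X" "b \<in> Y" "a \<noteq> b" using F_verts XY by auto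
      have "b \<notin> X" using ab(3) XY(1) by blast
      have "\<not> (a \<in> T \<and> b \<in> T)"
        using K2_12_subgraphI[OF H(1), of a b] H(4) F ab by (auto simp: T_def)
      moreover have "f a \<in> (if a \<in> T then U else W)" "f b \<in> (if b \<in> T then V else Z)"
        using f(2)[of a] f(2)[of b] F_verts ab \<open>b \<notin> X\<close> by (auto simp: block_def)
      ultimately have "{f a, f b} \<in> edges G"
        using UZ[of "f a" "f b"] ZW[of "f b" "f a"] WV[of "f a" "f b"]
        by (auto simp: insert_commute split: if_splits)
      then show ?thesis using ab by simp
    qed
  qed
  show ?thesis unfolding subgraph_def using f(1) f_verts f_edge by blast
qed

lemma subgraph_of_marked_path_box:
  fixes H :: "'a hgraph" and G :: "'b hgraph"
  assumes H: "is_hypergraph H" "R H = {1, 2}" "two_graph_bipartite H" "\<not> subgraph K2_12 H"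
    and G: "is_hypergraph G"
    and box: "U \<times> Z \<times> W \<times> V \<subseteq> marked_paths G"
    and big: "card (verts H) \<le> card U" "card (verts H) \<le> card Z" "card (verts H) \<le> card W"
      "card (verts H) \<le> card V"
  shows "subgraph H G"
proof -
  have "1 \<in> R H" using H(2) by simp
  then have "card (verts H) > 0" using card_verts_ge_one[OF H(1)] by simp
  then have fin: "finite U" "finite Z" "finite W" "finite V" and ne: "U \<noteq> {}" "Z \<noteq> {}" "W \<noteq> {}" "V \<noteq> {}"
    using big by (auto intro: card_ge_0_finite)
  note blocks = marked_path_boxD[OF box ne]
  have "{u, z} \<union> {w, v} \<subseteq> verts G" if "u \<in> U" "z \<in> Z" "w \<in> W" "v \<in> V" for u z w v
    using blocks(8)[OF that(1,2)] blocks(10)[OF that(3,4)] G by (auto simp: is_hypergraph_def)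
  then have "U \<union> Z \<union> W \<union> V \<subseteq> verts G" using ne by blast
  then show ?thesis using subgraph_of_path_blowup[OF H fin big blocks] by blast
qed

section \<open>Counting marked paths and 2-edges\<close>

lemma real_card_Diff_ge: "finite B \<Longrightarrow> real (card A) - real (card B) \<le> real (card (A - B))"
  using diff_card_le_card_Diff[of B A] by linarith

lemma card_Sigma_Diff_ge:
  assumes "finite A" "finite B" "\<delta> \<le> real (card A)" "\<delta> \<le> real (card B)" "4 \<le> \<delta>"
  shows "(\<delta> / 2)^2 \<le> real (card (SIGMA u:A - {w}. B - {z, u}))"
proof -
  have "0 \<le> \<delta> * (\<delta> - 4)" using assms(5) by simp
  then have "(\<delta> / 2)^2 \<le> (\<delta> - 1) * (\<delta> - 2)" by (simp add: power2_eq_square algebra_simps)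
  also have "\<dots> \<le> real (card (A - {w})) * (\<delta> - 2)"
    using real_card_Diff_ge[of "{w}" A] assms(3,5) by (intro mult_right_mono) auto
  also have "\<dots> = (\<Sum>u\<in>A - {w}. \<delta> - 2)" by simp
  also have "\<dots> \<le> (\<Sum>u\<in>A - {w}. real (card (B - {z, u})))"
  proof (rule sum_mono)
    fix u
    have "real (card {z, u}) \<le> 2" by (simp add: card_insert_if)
    then show "\<delta> - 2 \<le> real (card (B - {z, u}))"
      using real_card_Diff_ge[of "{z, u}" B] assms(4) by simp
  qed
  also have "\<dots> = real (card (SIGMA u:A - {w}. B - {z, u}))"
    using assms(1,2) by (simp add: card_SigmaI)
  finally show ?thesis .
qed

definition marked_nbrs :: "'a hgraph \<Rightarrow> 'a \<Rightarrow> 'a set" where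
  "marked_nbrs G z = {u \<in> marked_verts G. u \<noteq> z \<and> {u, z} \<in> edges G}"

definition rich_verts :: "'a hgraph \<Rightarrow> real \<Rightarrow> 'a set" where
  "rich_verts G \<delta> = {z \<in> verts G. \<delta> \<le> real (card (marked_nbrs G z))}"

definition rich_edges :: "'a hgraph \<Rightarrow> real \<Rightarrow> 'a set set" where
  "rich_edges G \<delta> = {F \<in> edges G. card F = 2 \<and> F \<subseteq> rich_verts G \<delta>}"

lemma finite_marked_nbrs: "is_hypergraph G \<Longrightarrow> finite (marked_nbrs G z)"
  by (rule finite_subset[of _ "verts G"]) (auto simp: is_hypergraph_def marked_nbrs_def marked_verts_def)

lemma marked_paths_subset: "is_hypergraph G \<Longrightarrow> marked_paths G \<subseteq> verts G \<times> verts G \<times> verts G \<times> verts G"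
  by (auto simp: marked_paths_def marked_verts_def is_hypergraph_def)

text \<open>Each rich edge \<open>{z, w}\<close> extends to at least \<open>(\<delta> - 1) (\<delta> - 2)\<close> marked paths \<open>u z w v\<close>.\<close>
lemma card_marked_paths_ge:
  assumes G: "is_hypergraph G" and "4 \<le> \<delta>"
  shows "real (card (rich_edges G \<delta>)) * (\<delta> / 2)^2 \<le> real (card (marked_paths G))"
proof -
  define M where "M = {(z, w). {z, w} \<in> rich_edges G \<delta> \<and> z \<noteq> w}"
  define I where "I p = (SIGMA u:marked_nbrs G (fst p) - {snd p}. marked_nbrs G (snd p) - {fst p, u})" for p
  have fin_verts: "finite (verts G)" using G by (simp add: is_hypergraph_def)
  have fin_M: "finite M"
    by (rule finite_subset[of _ "verts G \<times> verts G"]) (use G fin_verts in \<open>auto simp: M_def rich_edges_def is_hypergraph_def\<close>)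
  have "rich_edges G \<delta> \<subseteq> (\<lambda>(z, w). {z, w}) ` M"
  proof
    fix F assume F: "F \<in> rich_edges G \<delta>"
    then obtain z w where "F = {z, w}" "z \<noteq> w" by (auto simp: rich_edges_def card_2_iff)
    then show "F \<in> (\<lambda>(z, w). {z, w}) ` M" using F by (force simp: M_def)
  qed
  then have "card (rich_edges G \<delta>) \<le> card M"
    using fin_M by (meson card_image_le card_mono finite_imageI le_trans)
  then have "real (card (rich_edges G \<delta>)) * (\<delta> / 2)^2 \<le> (\<Sum>p\<in>M. (\<delta> / 2)^2)"
    by (simp add: mult_right_mono)
  also have "\<dots> \<le> (\<Sum>p\<in>M. real (card (I p)))"
  proof (rule sum_mono)
    fix p assume "p \<in> M"
    then obtain z w where p: "p = (z, w)" "z \<in> rich_verts G \<delta>" "w \<in> rich_verts G \<delta>"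
      by (auto simp: M_def rich_edges_def)
    show "(\<delta> / 2)^2 \<le> real (card (I p))"
      unfolding I_def p(1) fst_conv snd_conv
      using p(2,3) assms(2) by (intro card_Sigma_Diff_ge finite_marked_nbrs[OF G]) (auto simp: rich_verts_def)
  qed
  also have "\<dots> = real (card (Sigma M I))"
  proof -
    have "finite (I p)" for p using finite_marked_nbrs[OF G] by (simp add: I_def)
    then show ?thesis using fin_M by (simp add: card_SigmaI)
  qed
  also have "\<dots> \<le> real (card (marked_paths G))"
  proof -
    let ?path = "\<lambda>(p, (u, v)). (u, fst p, snd p, v)"
    have "(u, z, w, v) \<in> marked_paths G"
      if "(z, w) \<in> M" "u \<in> marked_nbrs G z - {w}" "v \<in> marked_nbrs G w - {z, u}" for z w u v
    proof -
      have "{z, w} \<in> edges G" "z \<noteq> w" using that(1) by (auto simp: M_def rich_edges_def)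
      moreover have "{w, v} \<in> edges G" using that(3) by (simp add: marked_nbrs_def insert_commute)
      ultimately show ?thesis using that(2,3) by (auto simp: marked_paths_def marked_nbrs_def)
    qed
    then have "?path ` Sigma M I \<subseteq> marked_paths G" by (auto simp: I_def)
    moreover have "inj_on ?path (Sigma M I)" by (auto simp: inj_on_def)
    moreover have "finite (marked_paths G)"
      by (rule finite_subset[OF marked_paths_subset[OF G]]) (simp add: fin_verts)
    ultimately have "card (Sigma M I) \<le> card (marked_paths G)" by (intro card_inj_on_le)
    then show ?thesis by simp
  qed
  finally show ?thesis .
qed

text \<open>A 2-edge which is not rich has a poor end \<open>z\<close>; it either joins \<open>z\<close> to one of its marked
  neighbours, or joins two unmarked vertices of which at least one is poor.\<close>
lemma two_edges_subset:
  fixes \<delta> :: real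
  assumes G: "is_hypergraph G"
  defines "Z \<equiv> verts G - rich_verts G \<delta>" and "A \<equiv> marked_verts G"
  shows "{F \<in> edges G. card F = 2} \<subseteq> rich_edges G \<delta> \<union> (\<lambda>(z, u). {z, u}) ` Sigma Z (marked_nbrs G)
           \<union> {F. F \<subseteq> Z - A \<and> card F = 2} \<union> (\<lambda>(z, y). {z, y}) ` (Z \<times> (rich_verts G \<delta> - A))"
    (is "_ \<subseteq> _ \<union> ?B \<union> ?P \<union> ?Q")
proof
  have poor_edge: "{a, b} \<in> ?B \<union> ?P \<union> ?Q" if "a \<in> Z" "b \<in> verts G" "{a, b} \<in> edges G" "a \<noteq> b" for a b
  proof (cases "b \<in> A")
    case True
    then have "b \<in> marked_nbrs G a" using that by (auto simp: marked_nbrs_def A_def insert_commute)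
    then show ?thesis using that(1) by force
  next
    case b: False
    show ?thesis
    proof (cases "b \<in> Z")
      case True
      show ?thesis
      proof (cases "a \<in> A")
        case True
        then have "a \<in> marked_nbrs G b" using that by (auto simp: marked_nbrs_def A_def)
        then have "{b, a} \<in> ?B" using \<open>b \<in> Z\<close> by force
        then show ?thesis by (simp add: insert_commute)
      qed (use that b True in auto)
    qed (use that b in \<open>force simp: Z_def\<close>)
  qed
  fix F assume F: "F \<in> {F \<in> edges G. card F = 2}"
  then obtain a b where ab: "F = {a, b}" "a \<noteq> b" by (auto simp: card_2_iff)
  then have "a \<in> verts G" "b \<in> verts G" "{a, b} \<in> edges G" "{b, a} \<in> edges G"
    using F G by (auto simp: is_hypergraph_def insert_commute)
  then show "F \<in> rich_edges G \<delta> \<union> ?B \<union> ?P \<union> ?Q"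
    using poor_edge[of a b] poor_edge[of b a] F ab
    by (cases "a \<in> rich_verts G \<delta> \<and> b \<in> rich_verts G \<delta>") (auto simp: rich_edges_def Z_def insert_commute)
qed

lemma card_two_edges_le:
  fixes \<delta> :: real
  assumes G: "is_hypergraph G"
  defines "Z \<equiv> verts G - rich_verts G \<delta>" and "A \<equiv> marked_verts G"
  shows "real (card {F \<in> edges G. card F = 2}) \<le> real (card (rich_edges G \<delta>)) + real (card Z) * \<delta>
           + real (card (Z - A)) * (real (card (Z - A)) - 1) / 2
           + real (card Z) * real (card (rich_verts G \<delta> - A))"
proof -
  define B where "B = (\<lambda>(z, u). {z, u}) ` Sigma Z (marked_nbrs G)"
  define P where "P = {F. F \<subseteq> Z - A \<and> card F = 2}"
  define Q where "Q = (\<lambda>(z, y). {z, y}) ` (Z \<times> (rich_verts G \<delta> - A))"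
  have fin_verts: "finite (verts G)" using G by (simp add: is_hypergraph_def)
  have fin_Z: "finite Z" "finite (rich_verts G \<delta>)" using fin_verts by (simp_all add: Z_def rich_verts_def)
  have fin: "finite (rich_edges G \<delta>)" "finite B" "finite P" "finite Q"
    using finite_edges[OF G] fin_Z finite_marked_nbrs[OF G] by (simp_all add: rich_edges_def B_def P_def Q_def)
  have "card {F \<in> edges G. card F = 2} \<le> card (rich_edges G \<delta> \<union> B \<union> P \<union> Q)"
    using two_edges_subset[OF G, of \<delta>] fin unfolding B_def P_def Q_def Z_def A_def by (intro card_mono) auto
  also have "\<dots> \<le> card (rich_edges G \<delta>) + card B + card P + card Q"
    by (meson add_le_mono card_Un_le le_trans order_refl)
  finally have "card {F \<in> edges G. card F = 2} \<le> card (rich_edges G \<delta>) + card B + card P + card Q" .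
  moreover have "real (card B) \<le> real (card Z) * \<delta>"
  proof -
    have "card B \<le> card (Sigma Z (marked_nbrs G))" unfolding B_def by (rule card_image_le)
      (use fin_Z finite_marked_nbrs[OF G] in auto)
    also have "\<dots> = (\<Sum>z\<in>Z. card (marked_nbrs G z))"
      using fin_Z finite_marked_nbrs[OF G] by (simp add: card_SigmaI)
    finally have "real (card B) \<le> (\<Sum>z\<in>Z. real (card (marked_nbrs G z)))" by (simp flip: of_nat_sum)
    also have "\<dots> \<le> (\<Sum>z\<in>Z. \<delta>)"
      by (rule sum_mono) (auto simp: Z_def rich_verts_def)
    finally show ?thesis by simp
  qed
  moreover have "real (card P) = real (card (Z - A)) * (real (card (Z - A)) - 1) / 2"
    unfolding P_def using n_subsets[of "Z - A" 2] fin_Z by (simp add: of_nat_choose_two)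
  moreover have "card Q \<le> card Z * card (rich_verts G \<delta> - A)"
    unfolding Q_def using fin_Z card_image_le[of "Z \<times> (rich_verts G \<delta> - A)"] by (simp add: card_cartesian_product)
  then have "real (card Q) \<le> real (card Z) * real (card (rich_verts G \<delta> - A))"
    by (simp flip: of_nat_mult)
  ultimately show ?thesis by linarith
qed

section \<open>The density estimate\<close>

text \<open>The maximum is attained at \<open>P = 0\<close>, \<open>Q = N/4\<close>.\<close>
lemma three_part_density_le:
  fixes N P Q :: real
  assumes "N > 0" "P \<ge> 0" "Q \<ge> 0" "P + Q \<le> N"
  shows "(N - P - Q) / N + P^2 / N^2 + 2 * (N - Q) * Q / N^2 \<le> 9/8"
proof -
  have "P^2 \<le> P * (N - Q)" using assms(2,4) by (simp add: power2_eq_square mult_left_mono)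
  also have "\<dots> \<le> P * N" using assms(2,3) by (simp add: mult_left_mono)
  finally have "P^2 - P * N \<le> 0" by simp
  moreover have "9/8 * N^2 - (N^2 + N * Q - 2 * Q^2) = 2 * (Q - N/4)^2"
    by (simp add: algebra_simps power2_eq_square)
  ultimately have "(N^2 + N * Q - 2 * Q^2) + (P^2 - P * N) \<le> 9/8 * N^2"
    using zero_le_power2[of "Q - N/4"] by linarith
  moreover have "(N - P - Q) / N + P^2 / N^2 + 2 * (N - Q) * Q / N^2
      = ((N^2 + N * Q - 2 * Q^2) + (P^2 - P * N)) / N^2"
    using assms(1) by (simp add: field_simps power2_eq_square)
  ultimately show ?thesis using assms(1) by (simp add: divide_simps)
qed

lemma density_bound_arith:
  fixes N P Q e c :: real
  assumes N: "N \<ge> 2" and "P \<ge> 0" "Q \<ge> 0" "P + Q \<le> N" "c \<ge> 0"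
    and e: "e \<le> c * N^2 + P * (P - 1) / 2 + (N - Q) * Q"
  shows "(N - P - Q) / N + e / (N * (N - 1) / 2) \<le> 9/8 + 4 * c + 1 / (2 * (N - 1))"
proof -
  have pos: "N - 1 > 0" "N > 0" using N by auto
  have "e / (N * (N - 1) / 2) \<le> 2 * c * N^2 / (N * (N - 1)) + P * (P - 1) / (N * (N - 1))
          + 2 * (N - Q) * Q / (N * (N - 1))"
    using e pos by (simp add: divide_simps) (simp add: algebra_simps)
  moreover have "2 * c * N^2 / (N * (N - 1)) \<le> 4 * c"
  proof -
    have "N^2 \<le> 2 * (N * (N - 1))" using N by (simp add: power2_eq_square algebra_simps)
    from mult_left_mono[OF this, of "2 * c"] show ?thesis
      using pos assms(5) by (simp add: divide_simps algebra_simps)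
  qed
  moreover have "P * (P - 1) / (N * (N - 1)) \<le> P^2 / N^2"
  proof -
    have "P^2 * (N * (N - 1)) - P * (P - 1) * N^2 = P * N * (N - P)"
      by (simp add: algebra_simps power2_eq_square)
    moreover have "P * N * (N - P) \<ge> 0" using assms(2-4) pos by simp
    ultimately show ?thesis using pos by (simp add: divide_simps)
  qed
  moreover have "2 * (N - Q) * Q / (N * (N - 1)) \<le> 2 * (N - Q) * Q / N^2 + 1 / (2 * (N - 1))"
  proof -
    have "2 * (N - Q) * Q / (N * (N - 1)) = 2 * (N - Q) * Q / N^2 + 2 * (N - Q) * Q / (N^2 * (N - 1))"
      using pos by (simp add: divide_simps) (simp add: algebra_simps power2_eq_square)
    moreover have "2 * (N - Q) * Q \<le> N^2 / 2"
      using zero_le_power2[of "Q - N/2"] by (simp add: algebra_simps power2_eq_square)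
    then have "2 * (N - Q) * Q / (N^2 * (N - 1)) \<le> (N^2 / 2) / (N^2 * (N - 1))"
      using pos by (intro divide_right_mono) auto
    moreover have "(N^2 / 2) / (N^2 * (N - 1)) = 1 / (2 * (N - 1))" using pos by (simp add: divide_simps)
    ultimately show ?thesis by linarith
  qed
  moreover have "(N - P - Q) / N + P^2 / N^2 + 2 * (N - Q) * Q / N^2 \<le> 9/8"
    using three_part_density_le pos(2) assms(2-4) by blast
  ultimately show ?thesis by linarith
qed

lemma card_one_edges_eq_card_marked_verts:
  "is_hypergraph G \<Longrightarrow> card {F \<in> edges G. card F = 1} = card (marked_verts G)"
proof -
  assume G: "is_hypergraph G"
  have "{F \<in> edges G. card F = 1} = (\<lambda>x. {x}) ` marked_verts G"
    using G by (auto simp: marked_verts_def is_hypergraph_def card_1_singleton_iff)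
  then show ?thesis by (simp add: card_image)
qed

lemma h_le_of_few_rich_edges:
  assumes G: "is_hypergraph G" "card (verts G) = n" "R G \<subseteq> {1, 2}" and "n \<ge> 2" "d > 0"
    and few: "real (card (rich_edges G (d * n))) \<le> d * real n ^ 2"
  shows "h n G \<le> 9/8 + 8 * d + 1 / (2 * (real n - 1))"
proof -
  define A where "A = marked_verts G"
  define Y where "Y = rich_verts G (d * n)"
  define p where "p = card (verts G - Y - A)"
  define q where "q = card (Y - A)"
  have fin: "finite (verts G)" using G(1) by (simp add: is_hypergraph_def)
  have sub: "A \<subseteq> verts G" "Y \<subseteq> verts G" by (auto simp: A_def Y_def marked_verts_def rich_verts_def)
  have "verts G - A = (verts G - Y - A) \<union> (Y - A)" using sub by auto
  then have "card (verts G - A) = p + q"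
    using fin by (simp add: p_def q_def) (subst card_Un_disjoint; auto intro: finite_subset)
  moreover have "card (verts G - A) = n - card A" "card A \<le> n"
    using G(2) fin sub card_mono[OF fin sub(1)] by (simp_all add: card_Diff_subset finite_subset)
  ultimately have parts: "real (card A) = real n - real p - real q" by simp
  have "card (verts G - Y) = n - card Y" "card Y \<le> n" "q \<le> card Y"
    using G(2) fin sub card_mono[OF fin sub(2)] card_mono[of Y "Y - A"] finite_subset[OF sub(2) fin]
    by (simp_all add: card_Diff_subset q_def)
  then have Z: "real (card (verts G - Y)) \<le> real n" "real (card (verts G - Y)) \<le> real n - real q"
    by linarith+
  have "real (card {F \<in> edges G. card F = 2})
          \<le> 2 * d * real n ^ 2 + real p * (real p - 1) / 2 + (real n - real q) * real q"
  proof -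
    have "real (card (verts G - Y)) * (d * real n) \<le> real n * (d * real n)"
      using Z(1) assms(5) by (intro mult_right_mono) auto
    moreover have "real (card (verts G - Y)) * real q \<le> (real n - real q) * real q"
      using Z(2) by (intro mult_right_mono) auto
    ultimately show ?thesis
      using card_two_edges_le[OF G(1), of "d * n"] few
      by (simp add: A_def Y_def p_def q_def power2_eq_square algebra_simps)
  qed
  moreover have "h n G = real (card A) / real n + real (card {F \<in> edges G. card F = 2}) / (real n * (real n - 1) / 2)"
    using h_eq_card_one_two_edges[OF finite_edges[OF G(1)] G(3), of n] card_one_edges_eq_card_marked_verts[OF G(1)]
    by (simp add: A_def of_nat_choose_two)
  ultimately show ?thesis
    using density_bound_arith[of "real n" "real p" "real q" "2 * d"] parts assms(4,5) by simp
qed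

section \<open>Asymptotics of \<open>pi_n\<close>\<close>

lemma eventually_subgraph_of_many_rich_edges:
  fixes H :: "'a hgraph"
  assumes H: "is_hypergraph H" "R H = {1, 2}" "two_graph_bipartite H" "\<not> subgraph K2_12 H"
    and d: "0 < d" "d \<le> 1"
  shows "eventually (\<lambda>n. \<forall>G :: nat hgraph. verts G = {0..<n} \<and> is_hypergraph G \<and>
           d * real n ^ 2 \<le> real (card (rich_edges G (d * n))) \<longrightarrow> subgraph H G) sequentially"
proof -
  define c where "c = d ^ 3 / 4"
  have "d ^ 3 \<le> 1" using d by (simp add: power_le_one)
  then have c: "0 < c" "c \<le> 1" using d by (simp_all add: c_def)
  have "1 \<in> R H" using H(2) by simp
  then have t: "card (verts H) \<ge> 1" by (rule card_verts_ge_one[OF H(1)])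
  have "eventually (\<lambda>n. 4 \<le> d * real n) sequentially"
    using d(1) by (rule eventually_le_mult_real_sequentially)
  with dense_4tuples_contain_box[OF c t]
  show ?thesis
  proof eventually_elim
    case (elim n)
    show ?case
    proof (intro allI impI, elim conjE)
      fix G :: "nat hgraph"
      assume G: "verts G = {0..<n}" "is_hypergraph G" and many: "d * real n ^ 2 \<le> real (card (rich_edges G (d * n)))"
      have "c * real n ^ 4 = (d * real n ^ 2) * (d * real n / 2)^2"
        by (simp add: c_def power2_eq_square power3_eq_cube power4_eq_xxxx)
      also have "\<dots> \<le> real (card (rich_edges G (d * n))) * (d * real n / 2)^2"
        using many by (intro mult_right_mono) auto
      also have "\<dots> \<le> real (card (marked_paths G))"
        using card_marked_paths_ge[OF G(2)] elim(2) by simp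
      finally have dense: "c * real n ^ 4 \<le> real (card (marked_paths G))" .
      have "marked_paths G \<subseteq> {0..<n} \<times> {0..<n} \<times> {0..<n} \<times> {0..<n}"
        using marked_paths_subset[OF G(2)] G(1) by simp
      then obtain U Z W V where "card U = card (verts H)" "card Z = card (verts H)"
          "card W = card (verts H)" "card V = card (verts H)" "U \<times> Z \<times> W \<times> V \<subseteq> marked_paths G"
        using elim(1)[rule_format, OF _ dense] by blast
      then show "subgraph H G" using subgraph_of_marked_path_box[OF H G(2)] by simp
    qed
  qed
qed

definition admissible :: "'a hgraph \<Rightarrow> nat \<Rightarrow> nat hgraph \<Rightarrow> bool" where
  "admissible H n G \<longleftrightarrow> verts G = {0..<n} \<and> is_hypergraph G \<and> R G \<subseteq> R H \<and> \<not> subgraph H G"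

lemma eventually_h_le_of_admissible:
  fixes H :: "'a hgraph"
  assumes H: "is_hypergraph H" "R H = {1, 2}" "two_graph_bipartite H" "\<not> subgraph K2_12 H"
    and "\<epsilon> > 0"
  shows "eventually (\<lambda>n. \<forall>G. admissible H n G \<longrightarrow> h n G \<le> 9/8 + \<epsilon>) sequentially"
proof -
  define d where "d = min (\<epsilon> / 16) 1"
  have d: "0 < d" "d \<le> 1" "8 * d \<le> \<epsilon> / 2" using assms(5) by (auto simp: d_def)
  have "eventually (\<lambda>n. 1 + \<epsilon> \<le> \<epsilon> * real n) sequentially"
    using assms(5) by (rule eventually_le_mult_real_sequentially)
  with eventually_subgraph_of_many_rich_edges[OF H d(1,2)]
  show ?thesis
  proof eventually_elim
    case (elim n)
    have "1 \<le> \<epsilon> * (real n - 1)" using elim(2) by (simp add: algebra_simps)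
    have "real n > 1"
    proof (rule ccontr)
      assume "\<not> real n > 1"
      then have "\<epsilon> * (real n - 1) \<le> 0" using assms(5) by (intro mult_nonneg_nonpos) auto
      then show False using \<open>1 \<le> \<epsilon> * (real n - 1)\<close> by linarith
    qed
    then have n: "real n \<ge> 2" "1 / (2 * (real n - 1)) \<le> \<epsilon> / 2"
      using \<open>1 \<le> \<epsilon> * (real n - 1)\<close> by (auto simp: field_simps)
    show ?case
    proof (intro allI impI)
      fix G assume "admissible H n G"
      then have G: "verts G = {0..<n}" "is_hypergraph G" "R G \<subseteq> {1, 2}" "\<not> subgraph H G"
        using H(2) by (auto simp: admissible_def)
      then have "real (card (rich_edges G (d * n))) < d * real n ^ 2"
        using elim(1) by (meson not_le)
      then have "h n G \<le> 9/8 + 8 * d + 1 / (2 * (real n - 1))"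
        using h_le_of_few_rich_edges[OF G(2) _ G(3), of n d] G(1) n(1) d(1) by simp
      then show "h n G \<le> 9/8 + \<epsilon>" using d(3) n(2) by linarith
    qed
  qed
qed

lemma finite_admissible_values: "finite {h n G | G. admissible H n G}"
proof -
  have "{h n G | G. admissible H n G} \<subseteq> (\<lambda>E. h n ({0..<n}, E)) ` Pow (Pow {0..<n})"
  proof
    fix x assume "x \<in> {h n G | G. admissible H n G}"
    then obtain G where G: "x = h n G" "admissible H n G" by blast
    have "G = ({0..<n}, edges G)"
      using G(2) by (cases G) (simp add: admissible_def verts_def edges_def)
    moreover have "edges G \<in> Pow (Pow {0..<n})"
      using G(2) by (auto simp: admissible_def is_hypergraph_def)
    ultimately
    show "x \<in> (\<lambda>E. h n ({0..<n}, E)) ` Pow (Pow {0..<n})" using G(1) by (metis imageI)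
  qed
  then show ?thesis by (rule finite_subset) simp
qed

lemma pi_n_eq_Max: "pi_n H n = Max {h n G | G. admissible H n G}"
  by (simp add: pi_n_def admissible_def)

lemma h_le_pi_n: "admissible H n G \<Longrightarrow> h n G \<le> pi_n H n"
  unfolding pi_n_eq_Max using finite_admissible_values by (rule Max_ge) blast

lemma pi_n_le:
  assumes "admissible H n G\<^sub>0" "\<And>G. admissible H n G \<Longrightarrow> h n G \<le> b"
  shows "pi_n H n \<le> b"
  unfolding pi_n_eq_Max
proof (rule Max.boundedI)
  show "finite {h n G | G. admissible H n G}" by (rule finite_admissible_values)
  show "{h n G | G. admissible H n G} \<noteq> {}" using assms(1) by blast
  show "a \<le> b" if "a \<in> {h n G | G. admissible H n G}" for a using that assms(2) by blast
qed

lemma admissible_marked_bipartite: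
  assumes "R H = {1, 2}" "k \<ge> 1" "subgraph (closed_path (2 * k)) H"
  shows "admissible H n (marked_bipartite n (3 * n div 4))"
proof -
  have "\<not> subgraph H (marked_bipartite n (3 * n div 4))"
    using closed_path_not_subgraph_marked_bipartite[OF assms(2)] subgraph_trans[OF assms(3)] by blast
  then show ?thesis using R_marked_bipartite assms(1)
    by (simp add: admissible_def verts_marked_bipartite is_hypergraph_marked_bipartite)
qed

lemma tendsto_nine_eighths_minus: "(\<lambda>n. 9/8 - 2 / real n ^ 2) \<longlonglongrightarrow> (9/8 :: real)"
proof -
  have "(\<lambda>n. 9/8 - 2 / real n ^ 2) \<longlonglongrightarrow> 9/8 - (0 :: real)"
    by (intro tendsto_diff tendsto_const real_tendsto_divide_at_top[OF tendsto_const]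
        filterlim_pow_at_top filterlim_real_sequentially) simp
  then show ?thesis by simp
qed

theorem mainTheorem9:
  fixes H :: "'a hgraph" and k :: nat
  assumes "is_hypergraph H"
    and "R H = {1, 2}"
    and "two_graph_bipartite H"
    and "\<not> subgraph K2_12 H"
    and "k \<ge> 1"
    and "subgraph (closed_path (2 * k)) H"
  shows "(\<lambda>n. pi_n H n) \<longlonglongrightarrow> 9 / 8"
proof -
  have extremal: "admissible H n (marked_bipartite n (3 * n div 4))" for n
    using admissible_marked_bipartite[OF assms(2,5,6)] .
  have lower: "9/8 - 2 / real n ^ 2 \<le> pi_n H n" if "n \<ge> 2" for n
    using h_marked_bipartite_three_quarters[OF that] h_le_pi_n[OF extremal] by (rule order_trans)
  have upper: "eventually (\<lambda>n. pi_n H n \<le> 9/8 + \<epsilon>) sequentially" if "\<epsilon> > 0" for \<epsilon>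
    using eventually_h_le_of_admissible[OF assms(1-4) that]
    by eventually_elim (intro pi_n_le[OF extremal], blast)
  show ?thesis
  proof (rule order_tendstoI)
    fix l :: real assume "l < 9/8"
    from order_tendstoD(1)[OF tendsto_nine_eighths_minus this] eventually_ge_at_top[of 2]
    show "eventually (\<lambda>n. l < pi_n H n) sequentially"
      by eventually_elim (meson lower less_le_trans)
  next
    fix u :: real assume "9/8 < u"
    then have "(u - 9/8) / 2 > 0" by simp
    from upper[OF this] show "eventually (\<lambda>n. pi_n H n < u) sequentially"
      by eventually_elim (use \<open>9/8 < u\<close> in \<open>simp add: field_simps\<close>)
  qed
qed

end
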